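(* Let $G=(V,E)$ be a connected undirected graph with $V=\{1,\dots,n\}$, $E=\{1,\dots,m\}$, labeled nodes $1,\dots,n_l$ (with $1\le n_l<n$), and edge dissimilarities $d_e>0$. Set $\lambda=0$. Then for every unlabeled node $p\in\{n_l+1,\dots,n\}$ and every vector of labels $\vec f_l=(f(1),\dots,f(n_l))^{\top}$, the flow-based prediction $f(p)=\vec w(p)^{\top}\vec f_l$ coincides with the Harmonic Functions prediction at $p$, i.e. with the $p$-th entry of $\vec f_u=-L_{uu}^{-1}L_{ul}\vec f_l$, where $L=AD^{-1}A^{\top}$, $D=\mathrm{diag}(d_1,\dots,d_m)$, and $L_{uu}$, $L_{ul}$ are the blocks of $L$ with rows indexed by unlabeled nodes and columns indexed by unlabeled, resp. labeled, nodes. (Equivalently, $\vec f_u$ is the minimizer of $\sum_{(i,j)\in E}-L_{ij}(f_i-f_j)^2$ over $\vec f\in\mathbb R^n$ subject to $f_i=f(i)$ for $i\le n_l$.)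
   Context: Orient each edge of $G$ arbitrarily and let $A$ be the $n\times m$ signed incidence matrix: for edge $e$ oriented from $i$ to $j$, $A_{ie}=+1$, $A_{je}=-1$, other entries of column $e$ zero. Let $A_l$ be the submatrix of rows $1,\dots,n_l$ and $A_u$ the submatrix of the remaining rows. For an unlabeled node $p$, let $\vec b_p\in\mathbb R^{n-n_l}$ be the vector (indexed by unlabeled nodes) that is $0$ everywhere except $-1$ at the entry of $p$. For $\lambda\ge0$, the flow $\vec x\in\mathbb R^m$ is the unique minimizer of $\frac12\sum_{e=1}^m d_e(x_e^2+\lambda|x_e|)$ subject to $A_u\vec x=\vec b_p$, and the prediction weights are $\vec w(p)=A_l\vec x\in\mathbb R^{n_l}$; the flow-based prediction is $f(p)=\sum_{i=1}^{n_l}w_i(p)f(i)$. *)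

theory Defs
  imports Complex_Main "Jordan_Normal_Form.Gauss_Jordan_Elimination"
begin

text \<open>Graph on nodes 1..n with edges 1..m; edge e is oriented from src e to dst e.
  Nodes 1..nl are labeled, nodes nl+1..n unlabeled.\<close>

definition adjacent :: "nat \<Rightarrow> (nat \<Rightarrow> nat) \<Rightarrow> (nat \<Rightarrow> nat) \<Rightarrow> nat \<Rightarrow> nat \<Rightarrow> bool" where
  "adjacent m src dst i j \<longleftrightarrow> (\<exists>e\<in>{1..m}. {src e, dst e} = {i, j})"

definition graph_connected :: "nat \<Rightarrow> nat \<Rightarrow> (nat \<Rightarrow> nat) \<Rightarrow> (nat \<Rightarrow> nat) \<Rightarrow> bool" where
  "graph_connected n m src dst \<longleftrightarrow>
     (\<forall>i\<in>{1..n}. \<forall>j\<in>{1..n}. (i, j) \<in> {(a, b). adjacent m src dst a b}\<^sup>*)"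

definition incidence :: "(nat \<Rightarrow> nat) \<Rightarrow> (nat \<Rightarrow> nat) \<Rightarrow> nat \<Rightarrow> nat \<Rightarrow> real" where
  "incidence src dst i e = (if i = src e then 1 else if i = dst e then -1 else 0)"

definition flow_objective :: "nat \<Rightarrow> (nat \<Rightarrow> real) \<Rightarrow> real \<Rightarrow> (nat \<Rightarrow> real) \<Rightarrow> real" where
  "flow_objective m d lam x = 1/2 * (\<Sum>e=1..m. d e * ((x e)\<^sup>2 + lam * \<bar>x e\<bar>))"

definition feasible_flow :: "nat \<Rightarrow> nat \<Rightarrow> nat \<Rightarrow> (nat \<Rightarrow> nat) \<Rightarrow> (nat \<Rightarrow> nat) \<Rightarrow> nat \<Rightarrow> (nat \<Rightarrow> real) \<Rightarrow> bool" where
  "feasible_flow n nl m src dst p x \<longleftrightarrow>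
     (\<forall>i\<in>{nl+1..n}. (\<Sum>e=1..m. incidence src dst i e * x e) = (if i = p then -1 else 0))
     \<and> (\<forall>e. e \<notin> {1..m} \<longrightarrow> x e = 0)"

definition flow :: "nat \<Rightarrow> nat \<Rightarrow> nat \<Rightarrow> (nat \<Rightarrow> nat) \<Rightarrow> (nat \<Rightarrow> nat) \<Rightarrow> (nat \<Rightarrow> real) \<Rightarrow> real \<Rightarrow> nat \<Rightarrow> (nat \<Rightarrow> real)" where
  "flow n nl m src dst d lam p = (THE x. feasible_flow n nl m src dst p x \<and>
      (\<forall>y. feasible_flow n nl m src dst p y \<longrightarrow> flow_objective m d lam x \<le> flow_objective m d lam y))"

definition pred_weight :: "nat \<Rightarrow> nat \<Rightarrow> nat \<Rightarrow> (nat \<Rightarrow> nat) \<Rightarrow> (nat \<Rightarrow> nat) \<Rightarrow> (nat \<Rightarrow> real) \<Rightarrow> real \<Rightarrow> nat \<Rightarrow> nat \<Rightarrow> real" where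
  "pred_weight n nl m src dst d lam p i = (\<Sum>e=1..m. incidence src dst i e * flow n nl m src dst d lam p e)"

definition flow_prediction :: "nat \<Rightarrow> nat \<Rightarrow> nat \<Rightarrow> (nat \<Rightarrow> nat) \<Rightarrow> (nat \<Rightarrow> nat) \<Rightarrow> (nat \<Rightarrow> real) \<Rightarrow> real \<Rightarrow> (nat \<Rightarrow> real) \<Rightarrow> nat \<Rightarrow> real" where
  "flow_prediction n nl m src dst d lam f p = (\<Sum>i=1..nl. pred_weight n nl m src dst d lam p i * f i)"

text \<open>Matrices (0-based in JNF: row index k stands for node k+1, column index k for edge k+1).\<close>
definition incidence_mat :: "nat \<Rightarrow> nat \<Rightarrow> (nat \<Rightarrow> nat) \<Rightarrow> (nat \<Rightarrow> nat) \<Rightarrow> real mat" where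
  "incidence_mat n m src dst = mat n m (\<lambda>(i, e). incidence src dst (i+1) (e+1))"

definition diss_mat :: "nat \<Rightarrow> (nat \<Rightarrow> real) \<Rightarrow> real mat" where
  "diss_mat m d = mat m m (\<lambda>(i, j). if i = j then d (i+1) else 0)"

definition laplacian_mat :: "nat \<Rightarrow> nat \<Rightarrow> (nat \<Rightarrow> nat) \<Rightarrow> (nat \<Rightarrow> nat) \<Rightarrow> (nat \<Rightarrow> real) \<Rightarrow> real mat" where
  "laplacian_mat n m src dst d =
     incidence_mat n m src dst * the (mat_inverse (diss_mat m d)) * transpose_mat (incidence_mat n m src dst)"

definition L_uu :: "nat \<Rightarrow> nat \<Rightarrow> nat \<Rightarrow> (nat \<Rightarrow> nat) \<Rightarrow> (nat \<Rightarrow> nat) \<Rightarrow> (nat \<Rightarrow> real) \<Rightarrow> real mat" where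
  "L_uu n nl m src dst d = mat (n - nl) (n - nl) (\<lambda>(i, j). laplacian_mat n m src dst d $$ (nl + i, nl + j))"

definition L_ul :: "nat \<Rightarrow> nat \<Rightarrow> nat \<Rightarrow> (nat \<Rightarrow> nat) \<Rightarrow> (nat \<Rightarrow> nat) \<Rightarrow> (nat \<Rightarrow> real) \<Rightarrow> real mat" where
  "L_ul n nl m src dst d = mat (n - nl) nl (\<lambda>(i, j). laplacian_mat n m src dst d $$ (nl + i, j))"

text \<open>f_u = - L_uu^{-1} L_ul f_l; its entry for node p (p > nl) has 0-based index p - nl - 1.\<close>
definition harmonic_prediction :: "nat \<Rightarrow> nat \<Rightarrow> nat \<Rightarrow> (nat \<Rightarrow> nat) \<Rightarrow> (nat \<Rightarrow> nat) \<Rightarrow> (nat \<Rightarrow> real) \<Rightarrow> (nat \<Rightarrow> real) \<Rightarrow> nat \<Rightarrow> real" where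
  "harmonic_prediction n nl m src dst d f p =
     ((- (the (mat_inverse (L_uu n nl m src dst d)) * L_ul n nl m src dst d)) *\<^sub>v vec nl (\<lambda>i. f (i+1))) $ (p - nl - 1)"

end

theory Submission
  imports Defs "Jordan_Normal_Form.Determinant"
begin

text \<open>With \<open>\<lambda> = 0\<close> the objective is the electrical energy \<open>1/2 \<Sum> d\<^sub>e x\<^sub>e\<^sup>2\<close>, and by
  Thomson's principle its minimizer among flows with prescribed divergence at the unlabeled
  nodes is a potential flow \<open>x = D\<^sup>-\<^sup>1 A\<^sub>u\<^sup>T \<mu>\<close>: any other feasible flow differs from it by a
  \<open>z\<close> with \<open>A\<^sub>u z = 0\<close>, which is orthogonal to \<open>D x\<close>. Feasibility means \<open>L\<^sub>u\<^sub>u \<mu> = b\<^sub>p\<close>, and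
  \<open>L\<^sub>u\<^sub>u\<close> is invertible because the Laplacian of a connected graph, grounded at a labeled node,
  is positive definite. Hence \<open>\<mu> = L\<^sub>u\<^sub>u\<^sup>-\<^sup>1 b\<^sub>p\<close> and the weights are
  \<open>w(p) = A\<^sub>l x = L\<^sub>l\<^sub>u \<mu>\<close>, i.e. \<open>w(p)\<^sup>T = -e\<^sub>p\<^sup>T L\<^sub>u\<^sub>u\<^sup>-\<^sup>1 L\<^sub>u\<^sub>l\<close>, using the symmetry of \<open>L\<close> and \<open>L\<^sub>u\<^sub>u\<^sup>-\<^sup>1\<close>.\<close>

lemma mat_inverse_of_trivial_kernel:
  fixes A :: "'a::field mat"
  assumes A: "A \<in> carrier_mat n n"
    and kernel: "\<And>v. v \<in> carrier_vec n \<Longrightarrow> A *\<^sub>v v = 0\<^sub>v n \<Longrightarrow> v = 0\<^sub>v n"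
  obtains B where "mat_inverse A = Some B" "A * B = 1\<^sub>m n" "B * A = 1\<^sub>m n" "B \<in> carrier_mat n n"
proof (cases "mat_inverse A")
  case None
  have "det A \<noteq> 0"
    using det_0_iff_vec_prod_zero_field[OF A] kernel by blast
  then show ?thesis
    using mat_inverse(1)[OF A None, of "()"] det_non_zero_imp_unit[OF A, of "()"] by blast
next
  case (Some B)
  then show ?thesis
    using mat_inverse(2)[OF A Some] that by blast
qed

lemma mat_inverse_of_right_inverse:
  fixes A B :: "'a::field mat"
  assumes A: "A \<in> carrier_mat n n" and B: "B \<in> carrier_mat n n" and AB: "A * B = 1\<^sub>m n"
  shows "mat_inverse A = Some B"
proof -
  have BA: "B * A = 1\<^sub>m n"
    using mat_mult_left_right_inverse[OF A B AB] .
  have "v = 0\<^sub>v n" if v: "v \<in> carrier_vec n" and Av: "A *\<^sub>v v = 0\<^sub>v n" for v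
  proof -
    have "v = (B * A) *\<^sub>v v" using BA v by simp
    also have "\<dots> = B *\<^sub>v (A *\<^sub>v v)" using A B v by (simp add: assoc_mult_mat_vec)
    also have "\<dots> = 0\<^sub>v n" unfolding Av by (rule eq_vecI) (use B in auto)
    finally show ?thesis .
  qed
  then obtain C where C: "mat_inverse A = Some C" "A * C = 1\<^sub>m n" "C \<in> carrier_mat n n"
    using mat_inverse_of_trivial_kernel[OF A] by metis
  have "C = (B * A) * C" using BA C(3) by simp
  also have "\<dots> = B * (A * C)" using A B C(3) by (simp add: assoc_mult_mat)
  finally show ?thesis using C(1,2) B by simp
qed

lemma inverse_of_symmetric_is_symmetric:
  fixes A B :: "'a::comm_ring_1 mat"
  assumes A: "A \<in> carrier_mat n n" and B: "B \<in> carrier_mat n n"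
    and sym: "transpose_mat A = A" and AB: "A * B = 1\<^sub>m n" and BA: "B * A = 1\<^sub>m n"
  shows "transpose_mat B = B"
proof -
  have BtA: "transpose_mat B * A = 1\<^sub>m n"
    using transpose_mult[OF A B] AB sym by simp
  have "transpose_mat B = transpose_mat B * (A * B)" using AB B by simp
  also have "\<dots> = (transpose_mat B * A) * B" using A B by (simp add: assoc_mult_mat)
  finally show ?thesis using BtA B by simp
qed

lemma sum_atLeastAtMost_reindex_lessThan:
  "(\<Sum>j\<in>{Suc k..n}. g j) = (\<Sum>j<n - k. g (Suc k + j))"
  by (rule sum.reindex_bij_witness[where i = "\<lambda>j. Suc k + j" and j = "\<lambda>j. j - Suc k"]) auto

lemma diss_mat_inverse:
  assumes nonzero: "\<forall>e\<in>{1..m}. d e \<noteq> 0"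
  shows "the (mat_inverse (diss_mat m d)) = mat m m (\<lambda>(i, j). if i = j then 1 / d (i+1) else 0)"
    (is "_ = ?E")
proof -
  have "diss_mat m d * ?E = 1\<^sub>m m"
  proof (rule eq_matI)
    fix i j assume "i < dim_row (1\<^sub>m m :: real mat)" "j < dim_col (1\<^sub>m m :: real mat)"
    then have ij: "i < m" "j < m" by auto
    have "(diss_mat m d * ?E) $$ (i, j)
        = (\<Sum>k<m. (if i = k then d (i+1) else 0) * (if k = j then 1 / d (k+1) else 0))"
      using ij by (simp add: diss_mat_def scalar_prod_def lessThan_atLeast0)
    also have "\<dots> = (\<Sum>k<m. if k = i then (if i = j then 1 else 0) else 0)"
      using nonzero by (intro sum.cong) auto
    finally show "(diss_mat m d * ?E) $$ (i, j) = 1\<^sub>m m $$ (i, j)" using ij by simp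
  qed (auto simp: diss_mat_def)
  then show ?thesis
    using mat_inverse_of_right_inverse[of "diss_mat m d" m ?E] by (simp add: diss_mat_def)
qed

definition laplacian_entry ::
  "nat \<Rightarrow> (nat \<Rightarrow> nat) \<Rightarrow> (nat \<Rightarrow> nat) \<Rightarrow> (nat \<Rightarrow> real) \<Rightarrow> nat \<Rightarrow> nat \<Rightarrow> real" where
  "laplacian_entry m src dst d i j = (\<Sum>e=1..m. incidence src dst i e * incidence src dst j e / d e)"

lemma laplacian_entry_commute: "laplacian_entry m src dst d i j = laplacian_entry m src dst d j i"
  by (simp add: laplacian_entry_def mult.commute)

lemma laplacian_mat_entry:
  assumes nonzero: "\<forall>e\<in>{1..m}. d e \<noteq> 0" and ij: "i < n" "j < n"
  shows "laplacian_mat n m src dst d $$ (i, j) = laplacian_entry m src dst d (i+1) (j+1)"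
proof -
  let ?A = "incidence_mat n m src dst"
  let ?AE = "mat n m (\<lambda>(i, e). incidence src dst (i+1) (e+1) / d (e+1))"
  have AE: "?A * the (mat_inverse (diss_mat m d)) = ?AE"
  proof (rule eq_matI)
    fix i e assume "i < dim_row ?AE" "e < dim_col ?AE"
    then have ie: "i < n" "e < m" by auto
    then have "(?A * the (mat_inverse (diss_mat m d))) $$ (i, e)
        = (\<Sum>k<m. incidence src dst (i+1) (k+1) * (if k = e then 1 / d (k+1) else 0))"
      by (simp add: diss_mat_inverse[OF nonzero] incidence_mat_def scalar_prod_def lessThan_atLeast0)
    then show "(?A * the (mat_inverse (diss_mat m d))) $$ (i, e) = ?AE $$ (i, e)"
      using ie by (simp add: if_distrib sum.delta' cong: if_cong)
  qed (auto simp: diss_mat_inverse[OF nonzero] incidence_mat_def)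
  have "laplacian_mat n m src dst d $$ (i, j)
      = (\<Sum>e<m. incidence src dst (i+1) (e+1) / d (e+1) * incidence src dst (j+1) (e+1))"
    unfolding laplacian_mat_def AE using ij
    by (simp add: incidence_mat_def scalar_prod_def lessThan_atLeast0)
  then show ?thesis
    by (simp add: laplacian_entry_def sum.atLeast1_atMost_eq)
qed

lemma incidence_sum_eq_difference:
  assumes "src e \<in> {1..n}" "dst e \<in> {1..n}" "src e \<noteq> dst e"
  shows "(\<Sum>i\<in>{1..n}. incidence src dst i e * W i) = W (src e) - W (dst e)"
proof -
  have "(\<Sum>i\<in>{1..n}. incidence src dst i e * W i)
      = (\<Sum>i\<in>{1..n}. (if i = src e then W i else 0) - (if i = dst e then W i else 0))"
    by (rule sum.cong) (use assms in \<open>auto simp: incidence_def\<close>)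
  also have "\<dots> = W (src e) - W (dst e)"
    using assms by (simp add: sum_subtractf)
  finally show ?thesis .
qed

lemma constant_on_connected_graph:
  assumes "graph_connected n m src dst" and "\<forall>e\<in>{1..m}. W (src e) = W (dst e)"
    and "i \<in> {1..n}" "j \<in> {1..n}"
  shows "W i = W j"
proof -
  have "(i, j) \<in> {(a, b). adjacent m src dst a b}\<^sup>*"
    using assms unfolding graph_connected_def by blast
  then show ?thesis
  proof (induction rule: rtrancl_induct)
    case (step b c)
    then obtain e where "e \<in> {1..m}" "{src e, dst e} = {b, c}"
      by (auto simp: adjacent_def)
    then have "W b = W c" using assms(2) by (auto simp: doubleton_eq_iff)
    then show ?case using step by simp
  qed simp
qed

lemma laplacian_quadratic_form:
  "(\<Sum>i\<in>S. \<Sum>j\<in>S. laplacian_entry m src dst d i j * v i * v j)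
    = (\<Sum>e=1..m. (\<Sum>i\<in>S. incidence src dst i e * v i)\<^sup>2 / d e)"
proof -
  let ?t = "\<lambda>e i j. incidence src dst i e * incidence src dst j e / d e * v i * v j"
  have "(\<Sum>i\<in>S. \<Sum>j\<in>S. laplacian_entry m src dst d i j * v i * v j)
      = (\<Sum>i\<in>S. \<Sum>j\<in>S. \<Sum>e=1..m. ?t e i j)"
    by (simp add: laplacian_entry_def sum_distrib_right)
  also have "\<dots> = (\<Sum>i\<in>S. \<Sum>e=1..m. \<Sum>j\<in>S. ?t e i j)"
    by (rule sum.cong[OF refl]) (rule sum.swap)
  also have "\<dots> = (\<Sum>e=1..m. \<Sum>i\<in>S. \<Sum>j\<in>S. ?t e i j)"
    by (rule sum.swap)
  also have "\<dots> = (\<Sum>e=1..m. (\<Sum>i\<in>S. incidence src dst i e * v i)\<^sup>2 / d e)"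
    by (intro sum.cong refl) (simp add: power2_eq_square sum_product sum_divide_distrib mult_ac)
  finally show ?thesis .
qed

lemma laplacian_form_eq_0_imp_eq_0:
  assumes edges: "\<forall>e\<in>{1..m}. src e \<in> {1..n} \<and> dst e \<in> {1..n} \<and> src e \<noteq> dst e"
    and connected: "graph_connected n m src dst"
    and dpos: "\<forall>e\<in>{1..m}. d e > 0"
    and S: "S \<subseteq> {1..n}" and ground: "q \<in> {1..n}" "q \<notin> S"
    and form: "(\<Sum>i\<in>S. \<Sum>j\<in>S. laplacian_entry m src dst d i j * v i * v j) = 0"
    and i: "i \<in> S"
  shows "v i = 0"
proof -
  define V where "V i = (if i \<in> S then v i else 0)" for i
  have edge_diff: "(\<Sum>i\<in>S. incidence src dst i e * v i) = V (src e) - V (dst e)"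
    if e: "e \<in> {1..m}" for e
  proof -
    have "(\<Sum>i\<in>S. incidence src dst i e * v i) = (\<Sum>i\<in>{1..n}. incidence src dst i e * V i)"
      using S by (intro sum.mono_neutral_cong_left) (auto simp: V_def)
    then show ?thesis
      using edges e incidence_sum_eq_difference by auto
  qed
  have terms_nonneg: "\<forall>e\<in>{1..m}. 0 \<le> (\<Sum>i\<in>S. incidence src dst i e * v i)\<^sup>2 / d e"
    using dpos by auto
  have "(\<Sum>e=1..m. (\<Sum>i\<in>S. incidence src dst i e * v i)\<^sup>2 / d e) = 0"
    using form by (simp add: laplacian_quadratic_form)
  then have "\<forall>e\<in>{1..m}. (\<Sum>i\<in>S. incidence src dst i e * v i)\<^sup>2 / d e = 0"
    using terms_nonneg by (metis (no_types, lifting) finite_atLeastAtMost sum_nonneg_eq_0_iff)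
  then have "\<forall>e\<in>{1..m}. V (src e) = V (dst e)"
    using dpos edge_diff by fastforce
  then have "V i = V q"
    using constant_on_connected_graph[OF connected] i S ground by blast
  then show ?thesis
    using i ground by (simp add: V_def)
qed

definition potential_flow ::
  "nat \<Rightarrow> (nat \<Rightarrow> nat) \<Rightarrow> (nat \<Rightarrow> nat) \<Rightarrow> (nat \<Rightarrow> real) \<Rightarrow> nat set \<Rightarrow> (nat \<Rightarrow> real) \<Rightarrow> nat \<Rightarrow> real" where
  "potential_flow m src dst d S u e =
     (if e \<in> {1..m} then (\<Sum>j\<in>S. incidence src dst j e * u j) / d e else 0)"

lemma divergence_potential_flow:
  "(\<Sum>e=1..m. incidence src dst i e * potential_flow m src dst d S u e)
    = (\<Sum>j\<in>S. laplacian_entry m src dst d i j * u j)"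
proof -
  have "(\<Sum>e=1..m. incidence src dst i e * potential_flow m src dst d S u e)
      = (\<Sum>e=1..m. \<Sum>j\<in>S. incidence src dst i e * incidence src dst j e / d e * u j)"
    by (intro sum.cong) (simp_all add: potential_flow_def sum_distrib_left sum_divide_distrib mult_ac)
  also have "\<dots> = (\<Sum>j\<in>S. laplacian_entry m src dst d i j * u j)"
    by (subst sum.swap) (simp add: laplacian_entry_def sum_distrib_right)
  finally show ?thesis .
qed

lemma flow_objective_nonneg:
  assumes "\<forall>e\<in>{1..m}. d e > 0"
  shows "0 \<le> flow_objective m d 0 x"
  using assms unfolding flow_objective_def by (auto intro!: sum_nonneg)

lemma flow_objective_eq_0_imp_eq_0:
  assumes dpos: "\<forall>e\<in>{1..m}. d e > 0" and "flow_objective m d 0 x = 0" and e: "e \<in> {1..m}"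
  shows "x e = 0"
proof -
  have "(\<Sum>e=1..m. d e * (x e)\<^sup>2) = 0"
    using assms by (simp add: flow_objective_def)
  moreover have "\<forall>e\<in>{1..m}. 0 \<le> d e * (x e)\<^sup>2"
    using dpos by auto
  ultimately have "d e * (x e)\<^sup>2 = 0"
    using e by (metis (no_types, lifting) finite_atLeastAtMost sum_nonneg_eq_0_iff)
  moreover have "d e > 0" using dpos e by blast
  ultimately show ?thesis by simp
qed

text \<open>The Pythagorean identity behind Thomson's principle: a flow \<open>z\<close> without divergence
  on \<open>S\<close> is orthogonal, in the energy inner product, to every potential flow supported on \<open>S\<close>.\<close>

lemma flow_objective_potential_flow_add:
  assumes dpos: "\<forall>e\<in>{1..m}. d e > 0"
    and z: "\<forall>i\<in>S. (\<Sum>e=1..m. incidence src dst i e * z e) = 0"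
  shows "flow_objective m d 0 (\<lambda>e. potential_flow m src dst d S u e + z e)
    = flow_objective m d 0 (potential_flow m src dst d S u) + flow_objective m d 0 z"
proof -
  let ?x = "potential_flow m src dst d S u"
  have "(\<Sum>e=1..m. d e * ?x e * z e) = (\<Sum>e=1..m. \<Sum>j\<in>S. u j * (incidence src dst j e * z e))"
  proof (intro sum.cong refl)
    fix e assume e: "e \<in> {1..m}"
    then have "d e \<noteq> 0" using dpos by force
    then have "d e * ?x e = (\<Sum>j\<in>S. incidence src dst j e * u j)"
      using e by (simp add: potential_flow_def)
    then show "d e * ?x e * z e = (\<Sum>j\<in>S. u j * (incidence src dst j e * z e))"
      by (simp add: sum_distrib_left sum_distrib_right mult_ac)
  qed
  also have "\<dots> = (\<Sum>j\<in>S. u j * (\<Sum>e=1..m. incidence src dst j e * z e))"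
    by (subst sum.swap) (simp add: sum_distrib_left)
  finally have cross: "(\<Sum>e=1..m. d e * ?x e * z e) = 0"
    using z by simp
  have "(\<Sum>e=1..m. d e * (?x e + z e)\<^sup>2)
      = (\<Sum>e=1..m. d e * (?x e)\<^sup>2) + 2 * (\<Sum>e=1..m. d e * ?x e * z e) + (\<Sum>e=1..m. d e * (z e)\<^sup>2)"
    by (simp add: power2_eq_square algebra_simps sum.distrib sum_distrib_left)
  then show ?thesis
    using cross by (simp add: flow_objective_def algebra_simps)
qed

lemma potential_flow_unique_minimizer:
  assumes dpos: "\<forall>e\<in>{1..m}. d e > 0"
    and y_edges: "\<forall>e. e \<notin> {1..m} \<longrightarrow> y e = 0"
    and y_div: "\<forall>i\<in>S. (\<Sum>e=1..m. incidence src dst i e * y e)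
                      = (\<Sum>e=1..m. incidence src dst i e * potential_flow m src dst d S u e)"
  shows "flow_objective m d 0 (potential_flow m src dst d S u) \<le> flow_objective m d 0 y"
    and "flow_objective m d 0 y \<le> flow_objective m d 0 (potential_flow m src dst d S u)
           \<Longrightarrow> y = potential_flow m src dst d S u"
proof -
  let ?x = "potential_flow m src dst d S u"
  define z where "z e = y e - ?x e" for e
  have "\<forall>i\<in>S. (\<Sum>e=1..m. incidence src dst i e * z e) = 0"
    using y_div by (simp add: z_def right_diff_distrib sum_subtractf)
  moreover have "(\<lambda>e. ?x e + z e) = y"
    by (simp add: z_def)
  ultimately have split: "flow_objective m d 0 y = flow_objective m d 0 ?x + flow_objective m d 0 z"
    using flow_objective_potential_flow_add[OF dpos] by metis
  then show "flow_objective m d 0 ?x \<le> flow_objective m d 0 y"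
    using flow_objective_nonneg[OF dpos] by simp
  assume "flow_objective m d 0 y \<le> flow_objective m d 0 ?x"
  then have "flow_objective m d 0 z = 0"
    using split flow_objective_nonneg[OF dpos, of z] by simp
  then have "z e = 0" if "e \<in> {1..m}" for e
    using flow_objective_eq_0_imp_eq_0[OF dpos] that by blast
  then show "y = ?x"
    using y_edges by (auto simp: z_def potential_flow_def)
qed

lemma flow_eq_feasible_potential_flow:
  assumes dpos: "\<forall>e\<in>{1..m}. d e > 0"
    and feasible: "feasible_flow n nl m src dst p (potential_flow m src dst d {nl+1..n} u)"
  shows "flow n nl m src dst d 0 p = potential_flow m src dst d {nl+1..n} u"
proof -
  let ?x = "potential_flow m src dst d {nl+1..n} u"
  have same_divergence: "\<forall>i\<in>{nl+1..n}. (\<Sum>e=1..m. incidence src dst i e * y e)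
      = (\<Sum>e=1..m. incidence src dst i e * ?x e)"
    and y_edges: "\<forall>e. e \<notin> {1..m} \<longrightarrow> y e = 0"
    if "feasible_flow n nl m src dst p y" for y
    using that feasible unfolding feasible_flow_def by simp_all
  show ?thesis
    unfolding flow_def
  proof (rule the_equality)
    show "feasible_flow n nl m src dst p ?x \<and>
      (\<forall>y. feasible_flow n nl m src dst p y \<longrightarrow> flow_objective m d 0 ?x \<le> flow_objective m d 0 y)"
      using feasible potential_flow_unique_minimizer(1)[OF dpos y_edges same_divergence] by blast
  next
    fix y
    assume "feasible_flow n nl m src dst p y \<and>
      (\<forall>y'. feasible_flow n nl m src dst p y' \<longrightarrow> flow_objective m d 0 y \<le> flow_objective m d 0 y')"
    then show "y = ?x"
      using feasible potential_flow_unique_minimizer(2)[OF dpos y_edges same_divergence] by blast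
  qed
qed

text \<open>Unlabeled node \<open>nl + 1 + j\<close> corresponds to row and column \<open>j\<close> of \<open>L\<^sub>u\<^sub>u\<close>.\<close>

locale labeled_graph =
  fixes n m nl :: nat and src dst :: "nat \<Rightarrow> nat" and d :: "nat \<Rightarrow> real"
  assumes some_labeled: "1 \<le> nl" and some_unlabeled: "nl < n"
    and edges: "\<forall>e\<in>{1..m}. src e \<in> {1..n} \<and> dst e \<in> {1..n} \<and> src e \<noteq> dst e"
    and connected: "graph_connected n m src dst"
    and dpos: "\<forall>e\<in>{1..m}. d e > 0"
begin

abbreviation "lap \<equiv> laplacian_entry m src dst d"
abbreviation "Luu \<equiv> L_uu n nl m src dst d"
abbreviation "Lul \<equiv> L_ul n nl m src dst d"

lemma L_uu_carrier: "Luu \<in> carrier_mat (n - nl) (n - nl)"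
  by (simp add: L_uu_def)

lemma d_nonzero: "\<forall>e\<in>{1..m}. d e \<noteq> 0"
  using dpos by auto

lemma L_uu_entry:
  assumes "i < n - nl" "j < n - nl"
  shows "Luu $$ (i, j) = lap (nl+1+i) (nl+1+j)"
proof -
  have "Luu $$ (i, j) = laplacian_mat n m src dst d $$ (nl+i, nl+j)"
    using assms by (simp add: L_uu_def)
  also have "\<dots> = lap (nl+i+1) (nl+j+1)"
    using assms by (intro laplacian_mat_entry[OF d_nonzero]) auto
  finally show ?thesis by simp
qed

lemma L_ul_entry:
  assumes "i < n - nl" "j < nl"
  shows "Lul $$ (i, j) = lap (nl+1+i) (j+1)"
proof -
  have "Lul $$ (i, j) = laplacian_mat n m src dst d $$ (nl+i, j)"
    using assms by (simp add: L_ul_def)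
  also have "\<dots> = lap (nl+i+1) (j+1)"
    using assms some_unlabeled by (intro laplacian_mat_entry[OF d_nonzero]) auto
  finally show ?thesis by simp
qed

lemma L_uu_symmetric: "transpose_mat Luu = Luu"
  by (rule eq_matI) (use L_uu_carrier in \<open>auto simp: L_uu_entry laplacian_entry_commute\<close>)

lemma L_uu_trivial_kernel:
  assumes v: "v \<in> carrier_vec (n - nl)" and zero: "Luu *\<^sub>v v = 0\<^sub>v (n - nl)"
  shows "v = 0\<^sub>v (n - nl)"
proof -
  define u where "u j = v $ (j - nl - 1)" for j
  have "(\<Sum>i\<in>{nl+1..n}. \<Sum>j\<in>{nl+1..n}. lap i j * u i * u j) = v \<bullet> (Luu *\<^sub>v v)"
    using v L_uu_carrier
    by (simp add: sum_atLeastAtMost_reindex_lessThan scalar_prod_def lessThan_atLeast0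
        L_uu_entry u_def sum_distrib_left mult_ac)
  then have form: "(\<Sum>i\<in>{nl+1..n}. \<Sum>j\<in>{nl+1..n}. lap i j * u i * u j) = 0"
    using zero v by simp
  have "u (nl+1+i) = 0" if "i < n - nl" for i
    using laplacian_form_eq_0_imp_eq_0[OF edges connected dpos _ _ _ form, of 1] that some_labeled
    by auto
  then show ?thesis
    using v by (intro eq_vecI) (auto simp: u_def)
qed

definition Luu_inv :: "real mat" where
  "Luu_inv = the (mat_inverse Luu)"

lemma L_uu_inverse:
  "Luu * Luu_inv = 1\<^sub>m (n - nl)" "Luu_inv * Luu = 1\<^sub>m (n - nl)"
  "Luu_inv \<in> carrier_mat (n - nl) (n - nl)"
proof -
  obtain B where B: "mat_inverse Luu = Some B" "Luu * B = 1\<^sub>m (n - nl)" "B * Luu = 1\<^sub>m (n - nl)"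
    "B \<in> carrier_mat (n - nl) (n - nl)"
    using mat_inverse_of_trivial_kernel[OF L_uu_carrier L_uu_trivial_kernel] .
  moreover have "Luu_inv = B"
    using B(1) by (simp add: Luu_inv_def)
  ultimately show "Luu * Luu_inv = 1\<^sub>m (n - nl)" "Luu_inv * Luu = 1\<^sub>m (n - nl)"
    "Luu_inv \<in> carrier_mat (n - nl) (n - nl)"
    by simp_all
qed

lemma L_uu_inv_commute:
  assumes "i < n - nl" "j < n - nl"
  shows "Luu_inv $$ (i, j) = Luu_inv $$ (j, i)"
proof -
  have "transpose_mat Luu_inv = Luu_inv"
    using inverse_of_symmetric_is_symmetric[OF L_uu_carrier L_uu_inverse(3) L_uu_symmetric
        L_uu_inverse(1,2)] .
  then have "Luu_inv $$ (i, j) = transpose_mat Luu_inv $$ (i, j)"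
    by simp
  also have "\<dots> = Luu_inv $$ (j, i)"
    using assms L_uu_inverse(3) by simp
  finally show ?thesis .
qed

text \<open>The potential \<open>\<mu> = L\<^sub>u\<^sub>u\<^sup>-\<^sup>1 b\<^sub>p\<close> of the optimal flow towards \<open>p\<close>.\<close>

definition harmonic_potential :: "nat \<Rightarrow> nat \<Rightarrow> real" where
  "harmonic_potential p j = - Luu_inv $$ (j - nl - 1, p - nl - 1)"

lemma divergence_harmonic_potential:
  assumes p: "p \<in> {nl+1..n}" and i: "i \<in> {nl+1..n}"
  shows "(\<Sum>j\<in>{nl+1..n}. lap i j * harmonic_potential p j) = (if i = p then -1 else 0)"
proof -
  define a where "a = i - nl - 1"
  have a: "a < n - nl" "i = nl + 1 + a"
    using i by (auto simp: a_def)
  have index: "p - nl - 1 < n - nl"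
    using p by auto
  have "(\<Sum>j\<in>{nl+1..n}. lap i j * harmonic_potential p j)
      = - (\<Sum>j<n - nl. Luu $$ (a, j) * Luu_inv $$ (j, p - nl - 1))"
    using a by (simp add: sum_atLeastAtMost_reindex_lessThan harmonic_potential_def
        L_uu_entry sum_negf)
  also have "\<dots> = - (Luu * Luu_inv) $$ (a, p - nl - 1)"
    using a index p L_uu_carrier L_uu_inverse(3) by (simp add: scalar_prod_def lessThan_atLeast0)
  finally show ?thesis
    using a p L_uu_inverse(1) by auto
qed

lemma flow_eq_harmonic_potential_flow:
  assumes p: "p \<in> {nl+1..n}"
  shows "flow n nl m src dst d 0 p = potential_flow m src dst d {nl+1..n} (harmonic_potential p)"
proof (rule flow_eq_feasible_potential_flow[OF dpos])
  show "feasible_flow n nl m src dst p (potential_flow m src dst d {nl+1..n} (harmonic_potential p))"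
    unfolding feasible_flow_def divergence_potential_flow
    using divergence_harmonic_potential[OF p] by (simp add: potential_flow_def)
qed

lemma pred_weight_eq:
  assumes p: "p \<in> {nl+1..n}" and i: "i < nl"
  shows "pred_weight n nl m src dst d 0 p (Suc i)
    = - (\<Sum>j<n - nl. Luu_inv $$ (p - nl - 1, j) * Lul $$ (j, i))"
proof -
  have index: "p - nl - 1 < n - nl"
    using p by auto
  have "pred_weight n nl m src dst d 0 p (Suc i)
      = (\<Sum>j\<in>{nl+1..n}. lap (Suc i) j * harmonic_potential p j)"
    unfolding pred_weight_def flow_eq_harmonic_potential_flow[OF p] divergence_potential_flow ..
  also have "\<dots> = - (\<Sum>j<n - nl. lap (Suc i) (nl+1+j) * Luu_inv $$ (j, p - nl - 1))"
    by (simp add: sum_atLeastAtMost_reindex_lessThan harmonic_potential_def sum_negf)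
  also have "\<dots> = - (\<Sum>j<n - nl. Luu_inv $$ (p - nl - 1, j) * Lul $$ (j, i))"
    using i index
    by (intro arg_cong[where f = uminus] sum.cong refl)
      (simp add: L_ul_entry L_uu_inv_commute laplacian_entry_commute mult.commute)
  finally show ?thesis .
qed

lemma flow_prediction_eq_harmonic_prediction:
  assumes p: "p \<in> {nl+1..n}"
  shows "flow_prediction n nl m src dst d 0 f p = harmonic_prediction n nl m src dst d f p"
proof -
  have Lul_carrier: "Lul \<in> carrier_mat (n - nl) nl"
    by (simp add: L_ul_def)
  have index: "p - nl - 1 < n - nl"
    using p by auto
  have "flow_prediction n nl m src dst d 0 f p
      = - (\<Sum>i<nl. (\<Sum>j<n - nl. Luu_inv $$ (p - nl - 1, j) * Lul $$ (j, i)) * f (Suc i))"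
    using p by (simp add: flow_prediction_def sum.atLeast1_atMost_eq pred_weight_eq sum_negf)
  also have "\<dots> = - (\<Sum>j<n - nl. Luu_inv $$ (p - nl - 1, j) * (\<Sum>i<nl. Lul $$ (j, i) * f (Suc i)))"
    by (simp add: sum_distrib_left sum_distrib_right mult.assoc sum.swap[of _ "{..<nl}"])
  also have "\<dots> = harmonic_prediction n nl m src dst d f p"
    using index Lul_carrier L_uu_inverse(3)
    by (simp add: harmonic_prediction_def Luu_inv_def[symmetric] scalar_prod_def lessThan_atLeast0)
  finally show ?thesis .
qed

end

theorem proposition1:
  fixes n m nl :: nat and src dst :: "nat \<Rightarrow> nat" and d f :: "nat \<Rightarrow> real" and p :: nat
  assumes "1 \<le> nl" and "nl < n"
    and "\<forall>e\<in>{1..m}. src e \<in> {1..n} \<and> dst e \<in> {1..n} \<and> src e \<noteq> dst e"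
    and "\<forall>e\<in>{1..m}. \<forall>e'\<in>{1..m}. e \<noteq> e' \<longrightarrow> {src e, dst e} \<noteq> {src e', dst e'}"
    and "graph_connected n m src dst"
    and "\<forall>e\<in>{1..m}. d e > 0"
    and "p \<in> {nl+1..n}"
  shows "flow_prediction n nl m src dst d 0 f p = harmonic_prediction n nl m src dst d f p"
proof -
  interpret labeled_graph n m nl src dst d
    using assms by unfold_locales auto
  show ?thesis
    using assms(7) by (rule flow_prediction_eq_harmonic_prediction)
qed

end
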